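(* Let $G\in\mathcal{F}$ with adjacency matrix $A$, and let $x,y$ be two distinct non-adjacent vertices of $G$. Let $S$ be the $2\times 2$ principal submatrix of $A^2-A-2I$ indexed by $x,y$, that is, $S=\begin{bmatrix} d_x-2 & d_{xy}\\ d_{xy} & d_y-2\end{bmatrix}$. Then $S$ is positive semi-definite, and $\det S=(d_x-2)(d_y-2)-d_{xy}^2\geq 0$.
   Context: Graphs are finite and simple; spectrum means adjacency spectrum. $\mathcal{F}$ denotes the set of connected graphs whose spectrum consists of exactly one eigenvalue $r>2$, exactly one eigenvalue $s<-1$, and all remaining eigenvalues (with multiplicity) equal to $2$ or $-1$. $d_v$ is the degree of $v$ and $d_{uv}$ is the number of common neighbors of $u$ and $v$. *)

theory Defs
  imports "Jordan_Normal_Form.Determinant" "Jordan_Normal_Form.Char_Poly" "HOL-Library.Multiset"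
begin

definition simple_graph :: "nat \<Rightarrow> (nat \<Rightarrow> nat \<Rightarrow> bool) \<Rightarrow> bool" where
  "simple_graph n E \<longleftrightarrow> (\<forall>i j. E i j \<longrightarrow> i < n \<and> j < n) \<and> (\<forall>i j. E i j \<longrightarrow> E j i) \<and> (\<forall>i. \<not> E i i)"

definition connected_graph :: "nat \<Rightarrow> (nat \<Rightarrow> nat \<Rightarrow> bool) \<Rightarrow> bool" where
  "connected_graph n E \<longleftrightarrow> n > 0 \<and> (\<forall>i<n. \<forall>j<n. E\<^sup>*\<^sup>* i j)"

definition adj_matrix :: "nat \<Rightarrow> (nat \<Rightarrow> nat \<Rightarrow> bool) \<Rightarrow> real mat" where
  "adj_matrix n E = mat n n (\<lambda>(i,j). if E i j then 1 else 0)"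

definition degree :: "nat \<Rightarrow> (nat \<Rightarrow> nat \<Rightarrow> bool) \<Rightarrow> nat \<Rightarrow> nat" where
  "degree n E v = card {w. w < n \<and> E v w}"

definition common_nbrs :: "nat \<Rightarrow> (nat \<Rightarrow> nat \<Rightarrow> bool) \<Rightarrow> nat \<Rightarrow> nat \<Rightarrow> nat" where
  "common_nbrs n E u v = card {w. w < n \<and> E u w \<and> E v w}"

text \<open>M is the spectrum (eigenvalues with multiplicity) of the square matrix A:
  the characteristic polynomial is the product of (X - lambda) over M.\<close>
definition spectrum_mset :: "real mat \<Rightarrow> real multiset \<Rightarrow> bool" where
  "spectrum_mset A M \<longleftrightarrow> char_poly A = prod_mset (image_mset (\<lambda>a. [:-a, 1:]) M)"

definition in_F :: "nat \<Rightarrow> (nat \<Rightarrow> nat \<Rightarrow> bool) \<Rightarrow> bool" where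
  "in_F n E \<longleftrightarrow> simple_graph n E \<and> connected_graph n E \<and>
     (\<exists>r s a b. r > 2 \<and> s < -1 \<and>
        spectrum_mset (adj_matrix n E) ({#r, s#} + replicate_mset a 2 + replicate_mset b (-1)))"

definition psd :: "real mat \<Rightarrow> bool" where
  "psd S \<longleftrightarrow> S \<in> carrier_mat (dim_row S) (dim_row S) \<and> S\<^sup>T = S \<and>
     (\<forall>v \<in> carrier_vec (dim_row S). v \<bullet> (S *\<^sub>v v) \<ge> 0)"

definition principal2 :: "real mat \<Rightarrow> nat \<Rightarrow> nat \<Rightarrow> real mat" where
  "principal2 B x y = mat 2 2 (\<lambda>(i,j). B $$ ((if i = 0 then x else y), (if j = 0 then x else y)))"

end

theory Submission
  imports Defs "Jordan_Normal_Form.Jordan_Normal_Form_Existence"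
    "Jordan_Normal_Form.Jordan_Normal_Form_Uniqueness"
begin

text \<open>If A u = \<lambda> u then (A^2 - A - 2I) u = (\<lambda> - 2)(\<lambda> + 1) u, and (\<lambda> - 2)(\<lambda> + 1) \<ge> 0 for
  every eigenvalue \<lambda> \<in> {r, s, 2, -1} of a graph in F. A real symmetric matrix is diagonalisable
  with mutually orthogonal eigenspaces, so A^2 - A - 2I is positive semi-definite. Hence so are
  its principal submatrices, and a positive semi-definite 2 x 2 matrix has nonnegative
  determinant. The entries of A^2 count common neighbours, which gives the explicit form of S.\<close>

section \<open>Symmetric real matrices\<close>

lemma symmetric_mat_scalar_prod_swap:
  fixes A :: "'a :: comm_semiring_0 mat"
  assumes A: "A \<in> carrier_mat n n" and sym: "A\<^sup>T = A"
    and x: "x \<in> carrier_vec n" and y: "y \<in> carrier_vec n"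
  shows "(A *\<^sub>v x) \<bullet> y = x \<bullet> (A *\<^sub>v y)"
  using transpose_vec_mult_scalar[OF A y x] sym by simp

lemma symmetric_mat_eigenvectors_orthogonal:
  fixes A :: "'a :: idom mat"
  assumes A: "A \<in> carrier_mat n n" and sym: "A\<^sup>T = A"
    and x: "x \<in> carrier_vec n" and y: "y \<in> carrier_vec n"
    and ex: "A *\<^sub>v x = l \<cdot>\<^sub>v x" and ey: "A *\<^sub>v y = m \<cdot>\<^sub>v y" and "l \<noteq> m"
  shows "x \<bullet> y = 0"
proof -
  have "l * (x \<bullet> y) = (A *\<^sub>v x) \<bullet> y" using ex x y by simp
  also have "\<dots> = x \<bullet> (A *\<^sub>v y)" by (rule symmetric_mat_scalar_prod_swap[OF A sym x y])
  also have "\<dots> = m * (x \<bullet> y)" using ey x y by simp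
  finally show ?thesis using \<open>l \<noteq> m\<close> by simp
qed

lemma symmetric_mat_kernel_square:
  fixes M :: "real mat"
  assumes M: "M \<in> carrier_mat n n" and sym: "M\<^sup>T = M" and w: "w \<in> carrier_vec n"
    and MMw: "M *\<^sub>v (M *\<^sub>v w) = 0\<^sub>v n"
  shows "M *\<^sub>v w = 0\<^sub>v n"
proof -
  have "(M *\<^sub>v w) \<bullet> (M *\<^sub>v w) = w \<bullet> (M *\<^sub>v (M *\<^sub>v w))"
    using symmetric_mat_scalar_prod_swap[OF M sym w] M w by simp
  also have "\<dots> = 0" using MMw w by simp
  finally show ?thesis
    using conjugate_square_eq_0_vec[of "M *\<^sub>v w" n] M w by simp
qed

lemma symmetric_mat_kernel_pow:
  fixes M :: "real mat"
  assumes M: "M \<in> carrier_mat n n" and sym: "M\<^sup>T = M"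
  shows "mat_kernel (M ^\<^sub>m Suc k) = mat_kernel M"
proof (induction k)
  case 0
  show ?case using M by simp
next
  case (Suc k)
  have kernel_iff: "u \<in> mat_kernel N \<longleftrightarrow> u \<in> carrier_vec n \<and> N *\<^sub>v u = 0\<^sub>v n"
    if "N \<in> carrier_mat n n" for u N using that by (simp add: mat_kernel_def)
  have Mk: "M ^\<^sub>m k' \<in> carrier_mat n n" for k' using M by simp
  have "v \<in> mat_kernel (M ^\<^sub>m Suc (Suc k)) \<longleftrightarrow> v \<in> mat_kernel M" if v: "v \<in> carrier_vec n" for v
  proof -
    have Mv: "M *\<^sub>v v \<in> carrier_vec n" using M v by simp
    have "M ^\<^sub>m Suc (Suc k) *\<^sub>v v = M ^\<^sub>m Suc k *\<^sub>v (M *\<^sub>v v)"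
      using M v by (simp only: pow_mat.simps(2)) (rule assoc_mult_mat_vec, auto)
    then have "v \<in> mat_kernel (M ^\<^sub>m Suc (Suc k)) \<longleftrightarrow> M *\<^sub>v v \<in> mat_kernel (M ^\<^sub>m Suc k)"
      using kernel_iff[OF Mk] v Mv by (simp del: pow_mat.simps)
    also have "\<dots> \<longleftrightarrow> M *\<^sub>v (M *\<^sub>v v) = 0\<^sub>v n"
      using Suc.IH kernel_iff[OF M] Mv by simp
    also have "\<dots> \<longleftrightarrow> M *\<^sub>v v = 0\<^sub>v n"
      using symmetric_mat_kernel_square[OF M sym v] M by auto
    finally show ?thesis using kernel_iff[OF M] v by simp
  qed
  then show ?case using kernel_iff[OF M] kernel_iff[OF Mk] by blast
qed

lemma symmetric_dim_gen_eigenspace: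
  fixes A :: "real mat"
  assumes A: "A \<in> carrier_mat n n" and sym: "A\<^sup>T = A"
  shows "dim_gen_eigenspace A ev (Suc k) = dim_gen_eigenspace A ev 1"
proof -
  define M where "M = char_matrix A ev"
  have M: "M \<in> carrier_mat n n" unfolding M_def using A by simp
  have "(- ev \<cdot>\<^sub>m 1\<^sub>m n)\<^sup>T = - ev \<cdot>\<^sub>m 1\<^sub>m n" by (intro eq_matI) auto
  then have "M\<^sup>T = M"
    unfolding M_def char_matrix_def using A sym by (simp add: transpose_add)
  then have "mat_kernel (M ^\<^sub>m Suc k) = mat_kernel (M ^\<^sub>m 1)"
    using symmetric_mat_kernel_pow[OF M] by simp
  then show ?thesis
    unfolding dim_gen_eigenspace_def kernel_dim_def M_def[symmetric] using M by simp
qed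

text \<open>A Jordan block of size at least 2 would make the generalised eigenspace of order 2 larger
  than the eigenspace.\<close>
lemma symmetric_jordan_nf_blocks_trivial:
  fixes A :: "real mat"
  assumes A: "A \<in> carrier_mat n n" and sym: "A\<^sup>T = A"
    and jnf: "jordan_nf A n_as" and block: "(k, a) \<in> set n_as"
  shows "k = 1"
proof (rule ccontr)
  assume "k \<noteq> 1"
  moreover have "k \<noteq> 0" using jnf block unfolding jordan_nf_def by force
  ultimately obtain k' where k: "k = Suc (Suc k')" by (metis One_nat_def not0_implies_Suc)
  have "length (filter ((=) (k, a)) n_as) = compute_nr_of_jordan_blocks A a k"
    using compute_nr_of_jordan_blocks[OF jnf] k by simp
  also have "\<dots> = 0"
    unfolding compute_nr_of_jordan_blocks_def k
    using symmetric_dim_gen_eigenspace[OF A sym, of a k']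
      symmetric_dim_gen_eigenspace[OF A sym, of a "Suc k'"]
      symmetric_dim_gen_eigenspace[OF A sym, of a "Suc (Suc k')"] by simp
  finally show False using block by (auto simp: filter_empty_conv)
qed

lemma jordan_matrix_trivial_blocks:
  assumes "\<And>k a. (k, a) \<in> set n_as \<Longrightarrow> k = 1"
  shows "jordan_matrix n_as = mat (length n_as) (length n_as)
    (\<lambda>(i, j). if i = j then snd (n_as ! i) else (0 :: 'a :: {zero, one}))"
  using assms
proof (induction n_as)
  case Nil
  then show ?case by (auto simp: jordan_matrix_def)
next
  case (Cons ka n_as)
  obtain a where ka: "ka = (1, a)" using Cons.prems by (metis list.set_intros(1) prod.collapse)
  have IH: "jordan_matrix n_as = mat (length n_as) (length n_as)
      (\<lambda>(i, j). if i = j then snd (n_as ! i) else 0)"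
    by (rule Cons.IH) (use Cons.prems in auto)
  have "jordan_matrix (ka # n_as) = four_block_mat (jordan_block 1 a) (0\<^sub>m 1 (length n_as))
      (0\<^sub>m (length n_as) 1) (jordan_matrix n_as)"
    unfolding ka jordan_matrix_def by (simp add: Let_def jordan_matrix_def[symmetric] IH)
  also have "\<dots> = mat (length (ka # n_as)) (length (ka # n_as))
      (\<lambda>(i, j). if i = j then snd ((ka # n_as) ! i) else 0)"
    by (intro eq_matI) (auto simp: IH ka nth_Cons')
  finally show ?case .
qed

lemma symmetric_mat_eigenbasis:
  fixes A :: "real mat"
  assumes A: "A \<in> carrier_mat n n" and sym: "A\<^sup>T = A"
    and split: "char_poly A = (\<Prod>e\<leftarrow>es. [:- e, 1:])"
  obtains P Q d where "P \<in> carrier_mat n n" "Q \<in> carrier_mat n n" "P * Q = 1\<^sub>m n"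
    and "\<And>j. j < n \<Longrightarrow> A *\<^sub>v col P j = d j \<cdot>\<^sub>v col P j"
    and "\<And>j. j < n \<Longrightarrow> poly (char_poly A) (d j) = 0"
proof -
  obtain n_as where jnf: "jordan_nf A n_as" using jordan_nf_exists[OF A split] by blast
  define J where "J = jordan_matrix n_as"
  obtain P Q where wit: "similar_mat_wit A J P Q"
    using jnf unfolding jordan_nf_def similar_mat_def J_def by blast
  note P = similar_mat_witD2(6)[OF A wit] and Q = similar_mat_witD2(7)[OF A wit]
    and J = similar_mat_witD2(5)[OF A wit]
  define d where "d j = J $$ (j, j)" for j
  have blocks: "\<And>k a. (k, a) \<in> set n_as \<Longrightarrow> k = 1"
    using symmetric_jordan_nf_blocks_trivial[OF A sym jnf] by blast
  from jordan_matrix_trivial_blocks[of n_as, OF blocks]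
  have J_diag: "J = mat n n (\<lambda>(i, j). if i = j then d i else 0)"
    using J unfolding J_def[symmetric] d_def by (intro eq_matI) auto
  have "A * P = P * J * (Q * P)"
    using similar_mat_witD2(3)[OF A wit] P Q J by (simp add: assoc_mult_mat[of _ n n _ n _ n])
  then have AP: "A * P = P * J"
    using similar_mat_witD2(2)[OF A wit] P J by simp
  have eigen: "A *\<^sub>v col P j = d j \<cdot>\<^sub>v col P j" if j: "j < n" for j
  proof -
    have "A *\<^sub>v col P j = col (P * J) j" using AP A P j by (metis col_mult2)
    also have "\<dots> = d j \<cdot>\<^sub>v col P j"
      using P j by (subst J_diag)
        (intro eq_vecI, auto simp: scalar_prod_def if_distrib[of "times _"] cong: if_cong)
    finally show ?thesis .
  qed
  have "similar_mat A J" using wit unfolding similar_mat_def by blast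
  moreover have "upper_triangular J" by (subst J_diag) (simp add: upper_triangular_def)
  ultimately have "char_poly A = (\<Prod>a\<leftarrow>diag_mat J. [:- a, 1:])"
    using char_poly_similar char_poly_upper_triangular[OF J] by metis
  then have root: "poly (char_poly A) (d j) = 0" if "j < n" for j
    using that J by (simp add: poly_prod_list prod_list_zero_iff diag_mat_def d_def)
  show thesis using that P Q similar_mat_witD2(1)[OF A wit] eigen root by blast
qed

lemma mult_mat_vec_scalar_prod:
  fixes P :: "'a :: comm_ring_1 mat"
  assumes P: "P \<in> carrier_mat m n" and w: "w \<in> carrier_vec n" and u: "u \<in> carrier_vec n"
  shows "(P *\<^sub>v w) \<bullet> (P *\<^sub>v u) = (\<Sum>i<n. \<Sum>j<n. w $ i * u $ j * (col P i \<bullet> col P j))"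
proof -
  have "(P *\<^sub>v w) \<bullet> (P *\<^sub>v u)
      = (\<Sum>k<m. (\<Sum>i<n. P $$ (k, i) * w $ i) * (\<Sum>j<n. P $$ (k, j) * u $ j))"
    using P w u by (simp add: scalar_prod_def atLeast0LessThan)
  also have "\<dots> = (\<Sum>k<m. \<Sum>i<n. \<Sum>j<n. w $ i * u $ j * (P $$ (k, i) * P $$ (k, j)))"
    unfolding sum_product by (intro sum.cong refl) (simp add: mult_ac)
  also have "\<dots> = (\<Sum>i<n. \<Sum>j<n. \<Sum>k<m. w $ i * u $ j * (P $$ (k, i) * P $$ (k, j)))"
    by (simp add: sum.swap[of _ "{..<m}"])
  also have "\<dots> = (\<Sum>i<n. \<Sum>j<n. w $ i * u $ j * (col P i \<bullet> col P j))"
    using P by (simp add: scalar_prod_def sum_distrib_left atLeast0LessThan)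
  finally show ?thesis .
qed

lemma mult_mat_vec_eigenbasis:
  fixes B :: "'a :: comm_ring_1 mat"
  assumes B: "B \<in> carrier_mat n n" and P: "P \<in> carrier_mat n n"
    and eigen: "\<And>j. j < n \<Longrightarrow> B *\<^sub>v col P j = c j \<cdot>\<^sub>v col P j"
    and w: "w \<in> carrier_vec n"
  shows "B *\<^sub>v (P *\<^sub>v w) = P *\<^sub>v vec n (\<lambda>j. c j * w $ j)"
proof -
  have BP: "B * P = mat n n (\<lambda>(i, j). c j * P $$ (i, j))"
  proof (rule eq_matI)
    fix i j assume "i < dim_row (mat n n (\<lambda>(i, j). c j * P $$ (i, j)))"
      "j < dim_col (mat n n (\<lambda>(i, j). c j * P $$ (i, j)))"
    then have ij: "i < n" "j < n" by auto
    have "(B * P) $$ (i, j) = (B *\<^sub>v col P j) $ i" using B P ij by simp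
    also have "\<dots> = c j * P $$ (i, j)" unfolding eigen[OF ij(2)] using P ij by simp
    finally show "(B * P) $$ (i, j) = mat n n (\<lambda>(i, j). c j * P $$ (i, j)) $$ (i, j)"
      using ij by simp
  qed (use B P in auto)
  have "B *\<^sub>v (P *\<^sub>v w) = (B * P) *\<^sub>v w" using B P w by simp
  also have "\<dots> = P *\<^sub>v vec n (\<lambda>j. c j * w $ j)"
    unfolding BP using P w
    by (intro eq_vecI) (auto simp: scalar_prod_def mult.assoc mult.left_commute)
  finally show ?thesis .
qed

text \<open>Eigenvectors of the symmetric matrix B for different eigenvalues are orthogonal, so in the
  coordinates w of v with respect to the eigenbasis, v \<bullet> (B v) equals the squared length of
  P z with z j = sqrt (c j) * w j.\<close>
lemma quadratic_form_nonneg_of_eigenbasis: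
  fixes B :: "real mat"
  assumes B: "B \<in> carrier_mat n n" and sym: "B\<^sup>T = B"
    and P: "P \<in> carrier_mat n n" and Q: "Q \<in> carrier_mat n n" and PQ: "P * Q = 1\<^sub>m n"
    and eigen: "\<And>j. j < n \<Longrightarrow> B *\<^sub>v col P j = c j \<cdot>\<^sub>v col P j"
    and nonneg: "\<And>j. j < n \<Longrightarrow> c j \<ge> 0"
    and v: "v \<in> carrier_vec n"
  shows "v \<bullet> (B *\<^sub>v v) \<ge> 0"
proof -
  define w where "w = Q *\<^sub>v v"
  define z where "z = vec n (\<lambda>j. sqrt (c j) * w $ j)"
  have w: "w \<in> carrier_vec n" unfolding w_def using Q v by simp
  have v_eq: "v = P *\<^sub>v w"
    unfolding w_def using P Q v PQ by (simp flip: assoc_mult_mat_vec)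
  have orth: "col P i \<bullet> col P j = 0" if "i < n" "j < n" "c i \<noteq> c j" for i j
    using symmetric_mat_eigenvectors_orthogonal[OF B sym _ _ eigen eigen] that P by simp
  have "v \<bullet> (B *\<^sub>v v) = (P *\<^sub>v w) \<bullet> (P *\<^sub>v vec n (\<lambda>j. c j * w $ j))"
    unfolding v_eq using mult_mat_vec_eigenbasis[OF B P eigen w] by simp
  also have "\<dots> = (\<Sum>i<n. \<Sum>j<n. w $ i * (c j * w $ j) * (col P i \<bullet> col P j))"
    using mult_mat_vec_scalar_prod[OF P w] by simp
  also have "\<dots> = (\<Sum>i<n. \<Sum>j<n. z $ i * z $ j * (col P i \<bullet> col P j))"
  proof (intro sum.cong refl)
    fix i j assume "i \<in> {..<n}" "j \<in> {..<n}"
    then show "w $ i * (c j * w $ j) * (col P i \<bullet> col P j) = z $ i * z $ j * (col P i \<bullet> col P j)"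
      using orth[of i j] nonneg[of j] unfolding z_def
      by (cases "c i = c j") (auto simp: real_sqrt_mult[symmetric])
  qed
  also have "\<dots> = (P *\<^sub>v z) \<bullet> (P *\<^sub>v z)"
    using mult_mat_vec_scalar_prod[OF P, of z z] unfolding z_def by simp
  also have "\<dots> \<ge> 0"
    using conjugate_square_ge_0_vec[of "P *\<^sub>v z"] by simp
  finally show ?thesis .
qed

lemma eigenvector_shifted_square:
  fixes A :: "'a :: field mat"
  assumes A: "A \<in> carrier_mat n n" and u: "u \<in> carrier_vec n" and eigen: "A *\<^sub>v u = l \<cdot>\<^sub>v u"
  shows "(A * A - A - 2 \<cdot>\<^sub>m 1\<^sub>m n) *\<^sub>v u = ((l - 2) * (l + 1)) \<cdot>\<^sub>v u"
proof -
  have "(2 \<cdot>\<^sub>m 1\<^sub>m n) *\<^sub>v u = 2 \<cdot>\<^sub>v u" using u by (intro eq_vecI) auto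
  then have "(A * A - A - 2 \<cdot>\<^sub>m 1\<^sub>m n) *\<^sub>v u = A *\<^sub>v (A *\<^sub>v u) - A *\<^sub>v u - 2 \<cdot>\<^sub>v u"
    using A u by (simp add: minus_mult_distrib_mat_vec[of _ n n] minus_carrier_mat)
  also have "\<dots> = ((l - 2) * (l + 1)) \<cdot>\<^sub>v u"
    using A u mult_mat_vec[OF A u, of l] unfolding eigen
    by (intro eq_vecI) (auto simp: algebra_simps)
  finally show ?thesis .
qed

lemma symmetric_shifted_square:
  fixes A :: "'a :: comm_ring_1 mat"
  assumes A: "A \<in> carrier_mat n n" and sym: "A\<^sup>T = A"
  shows "(A * A - A - 2 \<cdot>\<^sub>m 1\<^sub>m n)\<^sup>T = A * A - A - 2 \<cdot>\<^sub>m 1\<^sub>m n"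
proof -
  have "(2 \<cdot>\<^sub>m 1\<^sub>m n)\<^sup>T = (2 \<cdot>\<^sub>m 1\<^sub>m n :: 'a mat)" by (intro eq_matI) auto
  then show ?thesis
    using A sym by (simp add: transpose_minus[of _ n n] transpose_mult[of _ n n] minus_carrier_mat)
qed

lemma quadratic_form_nonneg_of_eigenvalues:
  fixes A :: "real mat"
  assumes A: "A \<in> carrier_mat n n" and sym: "A\<^sup>T = A"
    and split: "char_poly A = (\<Prod>e\<leftarrow>es. [:- e, 1:])"
    and eigenvalues: "\<And>l. poly (char_poly A) l = 0 \<Longrightarrow> (l - 2) * (l + 1) \<ge> 0"
    and v: "v \<in> carrier_vec n"
  shows "v \<bullet> ((A * A - A - 2 \<cdot>\<^sub>m 1\<^sub>m n) *\<^sub>v v) \<ge> 0"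
proof -
  obtain P Q d where P: "P \<in> carrier_mat n n" and Q: "Q \<in> carrier_mat n n" and PQ: "P * Q = 1\<^sub>m n"
    and eigen: "\<And>j. j < n \<Longrightarrow> A *\<^sub>v col P j = d j \<cdot>\<^sub>v col P j"
    and root: "\<And>j. j < n \<Longrightarrow> poly (char_poly A) (d j) = 0"
    using symmetric_mat_eigenbasis[OF A sym split] by metis
  show ?thesis
  proof (rule quadratic_form_nonneg_of_eigenbasis[OF _ symmetric_shifted_square[OF A sym] P Q PQ _ _ v])
    show "A * A - A - 2 \<cdot>\<^sub>m 1\<^sub>m n \<in> carrier_mat n n" using A by (simp add: minus_carrier_mat)
    show "(A * A - A - 2 \<cdot>\<^sub>m 1\<^sub>m n) *\<^sub>v col P j = ((d j - 2) * (d j + 1)) \<cdot>\<^sub>v col P j"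
      if "j < n" for j using eigenvector_shifted_square[OF A _ eigen] that P by simp
    show "(d j - 2) * (d j + 1) \<ge> 0" if "j < n" for j using eigenvalues[OF root] that .
  qed
qed

section \<open>Positive semi-definite 2 x 2 matrices\<close>

lemma scalar_prod_mult_mat_vec_2:
  fixes M :: "'a :: comm_ring_1 mat"
  assumes M: "M \<in> carrier_mat 2 2" and v: "v \<in> carrier_vec 2"
  shows "v \<bullet> (M *\<^sub>v v) = v $ 0 * (M $$ (0, 0) * v $ 0 + M $$ (0, 1) * v $ 1)
    + v $ 1 * (M $$ (1, 0) * v $ 0 + M $$ (1, 1) * v $ 1)"
  using M v by (simp add: scalar_prod_def numeral_2_eq_2 atLeast0_lessThan_Suc algebra_simps)

lemma principal2_quadratic_form:
  fixes B :: "real mat"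
  assumes B: "B \<in> carrier_mat n n" and x: "x < n" and y: "y < n" and v: "v \<in> carrier_vec 2"
  defines "u \<equiv> v $ 0 \<cdot>\<^sub>v unit_vec n x + v $ 1 \<cdot>\<^sub>v unit_vec n y"
  shows "v \<bullet> (principal2 B x y *\<^sub>v v) = u \<bullet> (B *\<^sub>v u)"
proof -
  have Bu: "B *\<^sub>v u = v $ 0 \<cdot>\<^sub>v col B x + v $ 1 \<cdot>\<^sub>v col B y"
    unfolding u_def using B x y
    by (intro eq_vecI) (auto simp: scalar_prod_add_distrib[of _ n] col_def)
  show ?thesis
    unfolding Bu unfolding u_def using B x y v
    by (simp add: scalar_prod_mult_mat_vec_2 principal2_def add_scalar_prod_distrib[of _ n]
        algebra_simps)
qed

lemma principal2_transpose:
  fixes B :: "real mat"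
  assumes B: "B \<in> carrier_mat n n" and sym: "B\<^sup>T = B" and "x < n" "y < n"
  shows "(principal2 B x y)\<^sup>T = principal2 B x y"
proof -
  have "B $$ (i, j) = B $$ (j, i)" if "i < n" "j < n" for i j
    using arg_cong[OF sym, of "\<lambda>M. M $$ (j, i)"] B that by simp
  then show ?thesis using assms by (intro eq_matI) (auto simp: principal2_def)
qed

lemma psd_principal2:
  fixes B :: "real mat"
  assumes B: "B \<in> carrier_mat n n" and sym: "B\<^sup>T = B"
    and nonneg: "\<And>u. u \<in> carrier_vec n \<Longrightarrow> u \<bullet> (B *\<^sub>v u) \<ge> 0"
    and x: "x < n" and y: "y < n"
  shows "psd (principal2 B x y)"
  unfolding psd_def
proof (intro conjI ballI)
  show "principal2 B x y \<in> carrier_mat (dim_row (principal2 B x y)) (dim_row (principal2 B x y))"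
    by (simp add: principal2_def)
  show "(principal2 B x y)\<^sup>T = principal2 B x y" by (rule principal2_transpose[OF B sym x y])
  fix v :: "real vec" assume "v \<in> carrier_vec (dim_row (principal2 B x y))"
  then have "v \<in> carrier_vec 2" by (simp add: principal2_def)
  then show "v \<bullet> (principal2 B x y *\<^sub>v v) \<ge> 0"
    using principal2_quadratic_form[OF B x y] nonneg by simp
qed

lemma det_2x2:
  fixes M :: "'a :: comm_ring_1 mat"
  assumes M: "M \<in> carrier_mat 2 2"
  shows "det M = M $$ (0, 0) * M $$ (1, 1) - M $$ (0, 1) * M $$ (1, 0)"
proof -
  have minor: "mat_delete M i 0 \<in> carrier_mat 1 1" for i using mat_delete_carrier[OF M] by simp
  have "det M = (\<Sum>i<2. M $$ (i, 0) * cofactor M i 0)"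
    by (rule laplace_expansion_column[OF M]) simp
  also have "\<dots> = M $$ (0, 0) * cofactor M 0 0 + M $$ (1, 0) * cofactor M 1 0"
    by (simp add: numeral_2_eq_2)
  also have "cofactor M 0 0 = M $$ (1, 1)"
    unfolding cofactor_def using det_single[OF minor[of 0]] M by (simp add: mat_delete_def)
  also have "cofactor M 1 0 = - M $$ (0, 1)"
    unfolding cofactor_def using det_single[OF minor[of 1]] M by (simp add: mat_delete_def)
  finally show ?thesis by (simp add: algebra_simps)
qed

lemma binary_quadratic_form_nonneg_discriminant:
  fixes p q t :: real
  assumes nonneg: "\<And>c d. p * c\<^sup>2 + 2 * q * c * d + t * d\<^sup>2 \<ge> 0"
  shows "q\<^sup>2 \<le> p * t"
proof (rule ccontr)
  assume neg: "\<not> q\<^sup>2 \<le> p * t"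
  have "p * (p * t - q\<^sup>2) \<ge> 0" using nonneg[of q "-p"] by (simp add: algebra_simps power2_eq_square)
  moreover have "p \<ge> 0" using nonneg[of 1 0] by simp
  ultimately have p: "p = 0" using neg by (smt (verit) mult_pos_neg)
  have "t * (p * t - q\<^sup>2) \<ge> 0" using nonneg[of t "-q"] by (simp add: algebra_simps power2_eq_square)
  moreover have "t \<ge> 0" using nonneg[of 0 1] by simp
  ultimately have t: "t = 0" using neg by (smt (verit) mult_pos_neg)
  have "q = 0" using nonneg[of 1 1] nonneg[of 1 "-1"] p t by simp
  then show False using neg p by simp
qed

lemma psd_det_nonneg:
  assumes psd: "psd S" and dim: "dim_row S = 2"
  shows "det S \<ge> 0"
proof -
  have S: "S \<in> carrier_mat 2 2" and sym: "S\<^sup>T = S"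
    using psd dim unfolding psd_def by auto
  have sym01: "S $$ (1, 0) = S $$ (0, 1)" using arg_cong[OF sym, of "\<lambda>M. M $$ (0, 1)"] S by simp
  have "S $$ (0, 0) * c\<^sup>2 + 2 * S $$ (0, 1) * c * d + S $$ (1, 1) * d\<^sup>2 \<ge> 0" for c d
  proof -
    define v :: "real vec" where "v = vec 2 (\<lambda>i. if i = 0 then c else d)"
    have "v \<in> carrier_vec 2" unfolding v_def by simp
    then have "v \<bullet> (S *\<^sub>v v) \<ge> 0" using psd dim unfolding psd_def by simp
    then show ?thesis
      using scalar_prod_mult_mat_vec_2[OF S, of v] sym01 unfolding v_def
      by (simp add: algebra_simps power2_eq_square)
  qed
  then have "(S $$ (0, 1))\<^sup>2 \<le> S $$ (0, 0) * S $$ (1, 1)"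
    by (rule binary_quadratic_form_nonneg_discriminant)
  then show ?thesis using det_2x2[OF S] sym01 by (simp add: power2_eq_square)
qed

section \<open>Adjacency matrices\<close>

lemma adj_matrix_carrier: "adj_matrix n E \<in> carrier_mat n n"
  by (simp add: adj_matrix_def)

lemma adj_matrix_index:
  assumes "i < n" and "j < n"
  shows "adj_matrix n E $$ (i, j) = (if E i j then 1 else 0)"
  using assms by (simp add: adj_matrix_def)

lemma adj_matrix_transpose:
  assumes "\<And>i j. E i j \<Longrightarrow> E j i"
  shows "(adj_matrix n E)\<^sup>T = adj_matrix n E"
  using assms by (intro eq_matI) (auto simp: adj_matrix_def)

lemma adj_matrix_square_index:
  assumes sym: "\<And>i j. E i j \<Longrightarrow> E j i" and i: "i < n" and j: "j < n"
  shows "(adj_matrix n E * adj_matrix n E) $$ (i, j) = real (common_nbrs n E i j)"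
proof -
  have "(adj_matrix n E * adj_matrix n E) $$ (i, j)
      = (\<Sum>k\<in>{0..<n}. if E i k \<and> E j k then 1 else 0)"
    using i j sym by (auto simp: adj_matrix_def scalar_prod_def intro: sum.cong)
  also have "\<dots> = real (card {k. k < n \<and> E i k \<and> E j k})"
    by (simp add: sum.If_cases Int_def atLeast0LessThan conj_commute)
  finally show ?thesis unfolding common_nbrs_def .
qed

lemma adj_matrix_shifted_square_index:
  assumes sym: "\<And>i j. E i j \<Longrightarrow> E j i" and i: "i < n" and j: "j < n"
  shows "(adj_matrix n E * adj_matrix n E - adj_matrix n E - 2 \<cdot>\<^sub>m 1\<^sub>m n) $$ (i, j)
    = real (common_nbrs n E i j) - (if E i j then 1 else 0) - (if i = j then 2 else 0)"
  using adj_matrix_square_index[where E = E, OF sym i j] adj_matrix_index[OF i j] i j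
    adj_matrix_carrier[of n E] by (simp add: minus_carrier_mat)

lemma principal2_adj_matrix_shifted_square:
  assumes G: "simple_graph n E" and x: "x < n" and y: "y < n" and "x \<noteq> y" and "\<not> E x y"
  defines "A \<equiv> adj_matrix n E"
  shows "principal2 (A * A - A - 2 \<cdot>\<^sub>m 1\<^sub>m n) x y
    = mat 2 2 (\<lambda>(i, j). if i = j then real (if i = 0 then degree n E x else degree n E y) - 2
        else real (common_nbrs n E x y))"
proof -
  have sym: "\<And>i j. E i j \<Longrightarrow> E j i" and irrefl: "\<And>i. \<not> E i i"
    using G unfolding simple_graph_def by blast+
  have "common_nbrs n E y x = common_nbrs n E x y"
    unfolding common_nbrs_def by (metis conj_commute)
  moreover have "common_nbrs n E v v = degree n E v" for v
    unfolding common_nbrs_def degree_def by simp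
  ultimately show ?thesis
    unfolding principal2_def A_def
    using adj_matrix_shifted_square_index[where E = E, OF sym] assms irrefl sym by (intro eq_matI) (auto simp: less_2_cases_iff)
qed

lemma spectrum_mset_linear_factors:
  assumes "spectrum_mset A M"
  obtains es where "char_poly A = (\<Prod>e\<leftarrow>es. [:- e, 1:])"
proof -
  obtain es where "mset es = M" using ex_mset by blast
  then have "char_poly A = (\<Prod>e\<leftarrow>es. [:- e, 1:])"
    using assms unfolding spectrum_mset_def by (auto simp flip: prod_mset_prod_list)
  then show thesis by (rule that)
qed

lemma spectrum_mset_root_iff:
  assumes "spectrum_mset A M"
  shows "poly (char_poly A) l = 0 \<longleftrightarrow> l \<in># M"
  using assms unfolding spectrum_mset_def by (auto simp: poly_prod_mset prod_mset_zero_iff)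

lemma in_F_shifted_square_quadratic_form_nonneg:
  assumes "in_F n E" and u: "u \<in> carrier_vec n"
  defines "A \<equiv> adj_matrix n E"
  shows "u \<bullet> ((A * A - A - 2 \<cdot>\<^sub>m 1\<^sub>m n) *\<^sub>v u) \<ge> 0"
proof -
  obtain r s a b where G: "simple_graph n E" and r: "r > 2" and s: "s < -1"
    and spec: "spectrum_mset A ({#r, s#} + replicate_mset a 2 + replicate_mset b (-1))"
    using \<open>in_F n E\<close> unfolding in_F_def A_def by blast
  have A: "A \<in> carrier_mat n n" and sym: "A\<^sup>T = A"
    unfolding A_def using adj_matrix_carrier adj_matrix_transpose G
    unfolding simple_graph_def by blast+
  obtain es where split: "char_poly A = (\<Prod>e\<leftarrow>es. [:- e, 1:])"
    using spectrum_mset_linear_factors[OF spec] .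
  have "(l - 2) * (l + 1) \<ge> 0" if "poly (char_poly A) l = 0" for l
  proof -
    have "l \<ge> 2 \<or> l \<le> -1"
      using that r s unfolding spectrum_mset_root_iff[OF spec] by (auto split: if_splits)
    then show ?thesis by (auto intro: mult_nonneg_nonneg mult_nonpos_nonpos)
  qed
  then show ?thesis by (rule quadratic_form_nonneg_of_eigenvalues[OF A sym split _ u])
qed

theorem lemma4p2:
  fixes n :: nat and E :: "nat \<Rightarrow> nat \<Rightarrow> bool" and x y :: nat
  assumes "in_F n E"
    and "x < n" and "y < n" and "x \<noteq> y" and "\<not> E x y"
  defines "A \<equiv> adj_matrix n E"
  defines "S \<equiv> principal2 (A * A - A - 2 \<cdot>\<^sub>m 1\<^sub>m n) x y"
  shows "S = mat 2 2 (\<lambda>(i,j). if i = j then real (if i = 0 then degree n E x else degree n E y) - 2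
                            else real (common_nbrs n E x y))
     \<and> psd S
     \<and> det S = (real (degree n E x) - 2) * (real (degree n E y) - 2) - real (common_nbrs n E x y)^2
     \<and> det S \<ge> 0"
proof -
  have G: "simple_graph n E" using \<open>in_F n E\<close> unfolding in_F_def by blast
  have A: "A \<in> carrier_mat n n" and sym: "A\<^sup>T = A"
    unfolding A_def using adj_matrix_carrier adj_matrix_transpose G
    unfolding simple_graph_def by blast+
  have "psd S"
    unfolding S_def using assms(2,3) A in_F_shifted_square_quadratic_form_nonneg[OF assms(1)]
    by (intro psd_principal2 symmetric_shifted_square[OF A sym])
      (auto simp: A_def minus_carrier_mat)
  moreover have S_eq: "S = mat 2 2 (\<lambda>(i, j).
      if i = j then real (if i = 0 then degree n E x else degree n E y) - 2
      else real (common_nbrs n E x y))"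
    unfolding S_def A_def using principal2_adj_matrix_shifted_square[OF G assms(2-5)] .
  moreover have "det S = (real (degree n E x) - 2) * (real (degree n E y) - 2)
      - real (common_nbrs n E x y)^2"
    unfolding S_eq by (subst det_2x2) (auto simp: power2_eq_square)
  ultimately show ?thesis using psd_det_nonneg[of S] by (simp add: S_eq)
qed

end
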